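(* Let $n$ be a natural number and let $h=F_{6n-1}$, $k=F_{6n+1}$, where $F_m$ is the $m$-th Fibonacci number. Suppose $h,k$ are positive integers with $\gcd(h,k)=1$ and $\{h,k\}$ is a symmetric pair. Then $$kB_{1}(h,k)+hB_{1}(k,h)=\frac{h^{2}-h-k+k^{2}}{2}-hk+1.$$
   Context: The Fibonacci numbers are given by $F_0=0$, $F_1=1$, $F_{m+1}=F_m+F_{m-1}$ (equivalently $\frac{x}{1-x-x^2}=\sum_{m\ge0}F_mx^m$). $[x]$ denotes the greatest integer $\le x$, and $((x))=x-[x]-\tfrac12$ if $x\notin\mathbb{Z}$, $((x))=0$ if $x\in\mathbb{Z}$. The Dedekind sum is $s(a,b)=\sum_{j=1}^{b-1}\left(\left(\frac{aj}{b}\right)\right)\left(\left(\frac{j}{b}\right)\right)$ for integers $a$ and $b>0$; a pair $\{h,k\}$ of positive integers is called a symmetric pair if $s(h,k)=s(k,h)$. For coprime positive integers $a,b$, $$B_{1}(a,b)=\sum_{j=1}^{b-1}(-1)^{j+\left[\frac{aj}{b}\right]}\left[\frac{aj}{b}\right].$$ *)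

theory Defs
  imports Complex_Main "HOL-Number_Theory.Fib"
begin

definition sawtooth :: "real \<Rightarrow> real" where
  "sawtooth x = (if x \<in> \<int> then 0 else x - of_int \<lfloor>x\<rfloor> - 1/2)"

definition dedekind_sum :: "int \<Rightarrow> int \<Rightarrow> real" where
  "dedekind_sum a b =
     (\<Sum>j\<in>{1..b-1}. sawtooth (of_int (a*j) / of_int b) * sawtooth (of_int j / of_int b))"

definition B1 :: "int \<Rightarrow> int \<Rightarrow> int" where
  "B1 a b = (\<Sum>j\<in>{1..b-1}.
      (let q = \<lfloor>of_int (a*j) / (of_int b :: real)\<rfloor> in
        (if even (j + q) then 1 else -1) * q))"

end

theory Submission
  imports Defs
begin

text \<open>Writing \<open>(-1)^q q\<close> as the telescoping sum of \<open>(-1)^i (2i - 1)\<close> over \<open>i = 1..q\<close>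
turns \<open>B1 h k\<close> into a signed sum over the lattice points \<open>(j, i)\<close> of the box
\<open>[1, k-1] \<times> [1, h-1]\<close> on or below the line \<open>k i = h j\<close>, and \<open>B1 k h\<close> into the
corresponding sum over the points above it. For odd coprime \<open>h, k\<close> the reflection
\<open>(j, i) \<mapsto> (k - j, h - i)\<close> exchanges the two triangles and preserves the sign \<open>(-1)^(j+i)\<close>,
so \<open>k B1 h k + h B1 k h\<close> reduces to a signed sum of the values \<open>h j - k i\<close> over the lower
triangle. As in Sylvester's count for the Frobenius number \<open>N = h k - h - k\<close>, these values
and their complements \<open>N - (h j - k i)\<close> fill \<open>{0..N}\<close> exactly once; this evaluates the sum
and gives \<open>2 (k B1 h k + h B1 k h) = (h - 1) (k - 1)\<close>. For \<open>h = F(6n-1)\<close>, \<open>k = F(6n+1)\<close>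
both numbers are odd and Cassini's identity gives \<open>h\<^sup>2 + k\<^sup>2 + 1 = 3 h k\<close>, which yields the
stated formula.\<close>

definition neg_one_pow :: "int \<Rightarrow> int" where
  "neg_one_pow x = (if even x then 1 else -1)"

lemma neg_one_pow_add: "neg_one_pow (a + b) = neg_one_pow a * neg_one_pow b"
  by (auto simp: neg_one_pow_def)

lemma neg_one_pow_diff: "neg_one_pow (a - b) = neg_one_pow a * neg_one_pow b"
  by (auto simp: neg_one_pow_def)

lemma sum_neg_one_pow_even: "(\<Sum>j\<in>{1..2 * int m}. neg_one_pow j) = 0"
proof (induction m)
  case (Suc m)
  have "{1..2 * int (Suc m)} = insert (2 * int m + 2) (insert (2 * int m + 1) {1..2 * int m})"
    by auto
  with Suc show ?case by (simp add: neg_one_pow_def)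
qed simp

lemma sum_neg_one_pow_mult_even: "(\<Sum>j\<in>{0..2 * int m - 1}. neg_one_pow j * j) = - int m"
proof (induction m)
  case (Suc m)
  have "{0..2 * int (Suc m) - 1} = insert (2 * int m + 1) (insert (2 * int m) {0..2 * int m - 1})"
    by auto
  with Suc show ?case by (simp add: neg_one_pow_def)
qed simp

lemma neg_one_pow_mult_telescope:
  "0 \<le> q \<Longrightarrow> neg_one_pow q * q = (\<Sum>i\<in>{1..q}. neg_one_pow i * (2 * i - 1))"
proof (induction q rule: int_ge_induct)
  case (step q)
  then show ?case by (auto simp: atLeastAtMostPlus1_int_conv neg_one_pow_def algebra_simps)
qed simp

definition lattice_below :: "int \<Rightarrow> int \<Rightarrow> (int \<times> int) set" where
  "lattice_below h k = (SIGMA j:{1..k-1}. {i \<in> {1..h-1}. k * i \<le> h * j})"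

definition lattice_above :: "int \<Rightarrow> int \<Rightarrow> (int \<times> int) set" where
  "lattice_above h k = (SIGMA j:{1..k-1}. {i \<in> {1..h-1}. h * j \<le> k * i})"

lemma finite_lattice_below: "finite (lattice_below h k)"
  unfolding lattice_below_def
  by (rule finite_SigmaI) (auto intro: finite_subset[where B = "{1..h-1}"])

lemma finite_lattice_above: "finite (lattice_above h k)"
  unfolding lattice_above_def
  by (rule finite_SigmaI) (auto intro: finite_subset[where B = "{1..h-1}"])

lemma lattice_below_swap: "lattice_below k h = prod.swap ` lattice_above h k"
  by (auto simp: lattice_below_def lattice_above_def image_iff)

lemma atLeastAtMost_floor_eq_lattice_column:
  assumes "h > 0" "0 < j" "j < k"
  shows "{1..\<lfloor>of_int (h * j) / (of_int k :: real)\<rfloor>} = {i \<in> {1..h-1}. k * i \<le> h * j}"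
proof -
  have "i < h" if "k * i \<le> h * j" for i
  proof -
    have "h * j < h * k"
      using assms by simp
    with that have "k * i < k * h"
      by (simp add: mult.commute)
    then show ?thesis
      using assms by simp
  qed
  moreover have "i \<le> \<lfloor>of_int (h * j) / (of_int k :: real)\<rfloor> \<longleftrightarrow> k * i \<le> h * j" for i
    using assms by (simp add: le_floor_iff pos_le_divide_eq mult.commute flip: of_int_mult)
  ultimately show ?thesis by auto
qed

lemma B1_eq_sum_lattice_below:
  assumes "h > 0" "k > 0"
  shows "B1 h k = (\<Sum>(j, i)\<in>lattice_below h k. neg_one_pow (j + i) * (2 * i - 1))"
proof -
  define q where "q j = \<lfloor>of_int (h * j) / (of_int k :: real)\<rfloor>" for j
  have "B1 h k = (\<Sum>j\<in>{1..k-1}. neg_one_pow (j + q j) * q j)"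
    by (simp add: B1_def Let_def q_def neg_one_pow_def)
  also have "\<dots> = (\<Sum>j\<in>{1..k-1}. \<Sum>i\<in>{1..q j}. neg_one_pow (j + i) * (2 * i - 1))"
  proof (rule sum.cong)
    fix j assume "j \<in> {1..k-1}"
    then have "0 \<le> q j" using assms by (simp add: q_def)
    then show "neg_one_pow (j + q j) * q j = (\<Sum>i\<in>{1..q j}. neg_one_pow (j + i) * (2 * i - 1))"
      by (simp add: neg_one_pow_add neg_one_pow_mult_telescope sum_distrib_left mult.assoc)
  qed simp
  also have "\<dots> = (\<Sum>j\<in>{1..k-1}. \<Sum>i\<in>{i \<in> {1..h-1}. k * i \<le> h * j}.
      neg_one_pow (j + i) * (2 * i - 1))"
    using assms by (intro sum.cong refl)
      (simp add: q_def atLeastAtMost_floor_eq_lattice_column del: of_int_mult)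
  also have "\<dots> = (\<Sum>(j, i)\<in>lattice_below h k. neg_one_pow (j + i) * (2 * i - 1))"
    unfolding lattice_below_def
    by (rule sum.Sigma) (auto intro: finite_subset[where B = "{1..h-1}"])
  finally show ?thesis .
qed

lemma B1_eq_sum_lattice_above:
  assumes "h > 0" "k > 0"
  shows "B1 k h = (\<Sum>(j, i)\<in>lattice_above h k. neg_one_pow (j + i) * (2 * j - 1))"
  using assms by (simp add: B1_eq_sum_lattice_below lattice_below_swap sum.reindex swap_inj_on
      case_prod_beta add.commute)

lemma bij_betw_reflect_lattice:
  "bij_betw (\<lambda>(j, i). (k - j, h - i)) (lattice_below h k) (lattice_above h k)"
proof (rule bij_betw_byWitness[where f' = "\<lambda>(j, i). (k - j, h - i)"])
  have "k * i \<le> h * j \<longleftrightarrow> h * (k - j) \<le> k * (h - i)" for i j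
    by (simp add: algebra_simps)
  then show "(\<lambda>(j, i). (k - j, h - i)) ` lattice_below h k \<subseteq> lattice_above h k"
    "(\<lambda>(j, i). (k - j, h - i)) ` lattice_above h k \<subseteq> lattice_below h k"
    by (auto simp: lattice_below_def lattice_above_def)
qed auto

lemma coprime_mult_eq_imp_zero:
  fixes h k x y :: int
  assumes "coprime h k" "h * x = k * y" "\<bar>x\<bar> < k"
  shows "x = 0"
proof -
  have "k dvd h * x" using assms(2) by simp
  then have "k dvd x" using assms(1) by (simp add: coprime_commute coprime_dvd_mult_right_iff)
  then show "x = 0" using assms(3) dvd_imp_le_int by force
qed

locale odd_coprime_pair =
  fixes h k :: int
  assumes h_pos: "h > 0" and k_pos: "k > 0" and odd_h: "odd h" and odd_k: "odd k"
    and coprime: "coprime h k"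
begin

lemma lattice_below_Un_above: "lattice_below h k \<union> lattice_above h k = {1..k-1} \<times> {1..h-1}"
  by (auto simp: lattice_below_def lattice_above_def)

lemma lattice_below_Int_above: "lattice_below h k \<inter> lattice_above h k = {}"
proof -
  have "h * j \<noteq> k * i" if "j \<in> {1..k-1}" for i j
    using that coprime_mult_eq_imp_zero[OF coprime, of j i] by auto
  then show ?thesis by (auto simp: lattice_below_def lattice_above_def dest: order_antisym)
qed

lemma card_lattice_below: "2 * int (card (lattice_below h k)) = (h - 1) * (k - 1)"
proof -
  have "card ({1..k-1} \<times> {1..h-1}) = card (lattice_below h k) + card (lattice_above h k)"
    by (simp flip: lattice_below_Un_above add: card_Un_disjoint finite_lattice_below
        finite_lattice_above lattice_below_Int_above)
  moreover have "card (lattice_above h k) = card (lattice_below h k)"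
    using bij_betw_same_card[OF bij_betw_reflect_lattice] by simp
  moreover have "int (card ({1..k-1} \<times> {1..h-1})) = (h - 1) * (k - 1)"
    using h_pos k_pos by (simp add: card_cartesian_product)
  ultimately show ?thesis by simp
qed

lemma sum_neg_one_pow_lattice_below: "(\<Sum>(j, i)\<in>lattice_below h k. neg_one_pow (j + i)) = 0"
proof -
  let ?s = "\<lambda>(j, i). neg_one_pow (j + i)"
  obtain c where "k = 2 * c + 1" using odd_k by (rule oddE)
  with k_pos have k_minus_1: "k - 1 = 2 * int (nat c)" by simp
  have "sum ?s ({1..k-1} \<times> {1..h-1})
      = (\<Sum>j\<in>{1..k-1}. neg_one_pow j) * (\<Sum>i\<in>{1..h-1}. neg_one_pow i)"
    by (simp add: neg_one_pow_add sum_product sum.cartesian_product)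
  also have "\<dots> = 0"
    unfolding k_minus_1 by (simp only: sum_neg_one_pow_even mult_zero_left)
  finally have "sum ?s (lattice_below h k) + sum ?s (lattice_above h k) = 0"
    by (simp flip: lattice_below_Un_above add: sum.union_disjoint finite_lattice_below
        finite_lattice_above lattice_below_Int_above)
  moreover have "sum ?s (lattice_above h k) = sum ?s (lattice_below h k)"
  proof -
    have "?s (k - j, h - i) = ?s (j, i)" for j i
      using odd_h odd_k by (simp add: neg_one_pow_def)
    then show ?thesis
      using sum.reindex_bij_betw[OF bij_betw_reflect_lattice[where h = h and k = k], of ?s]
      by (simp add: case_prod_beta')
  qed
  ultimately show ?thesis by simp
qed

lemma lattice_values_partition:
  fixes v :: "int \<times> int \<Rightarrow> int" and N :: int
  defines "v \<equiv> \<lambda>(j, i). h * j - k * i" and "N \<equiv> h * k - h - k"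
  shows "inj_on v (lattice_below h k)"
    and "v ` lattice_below h k \<inter> (\<lambda>s. N - s) ` v ` lattice_below h k = {}"
    and "v ` lattice_below h k \<union> (\<lambda>s. N - s) ` v ` lattice_below h k = {0..N}"
proof -
  show inj: "inj_on v (lattice_below h k)"
  proof (rule inj_onI, clarify)
    fix j i j' i' assume "(j, i) \<in> lattice_below h k" "(j', i') \<in> lattice_below h k"
      and "v (j, i) = v (j', i')"
    then have eq: "h * (j - j') = k * (i - i')" and "\<bar>j - j'\<bar> < k"
      by (auto simp: v_def lattice_below_def algebra_simps)
    then have "j - j' = 0"
      using coprime_mult_eq_imp_zero[OF coprime] by blast
    with eq show "j = j' \<and> i = i'"
      using k_pos by simp
  qed
  show disjoint: "v ` lattice_below h k \<inter> (\<lambda>s. N - s) ` v ` lattice_below h k = {}"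
  proof (rule ccontr)
    assume "v ` lattice_below h k \<inter> (\<lambda>s. N - s) ` v ` lattice_below h k \<noteq> {}"
    then obtain j i j' i' where "(j, i) \<in> lattice_below h k" "(j', i') \<in> lattice_below h k"
      and "v (j, i) = N - v (j', i')"
      by auto
    then have "h * (j + j' + 1 - k) = k * (i + i' - 1)" "\<bar>j + j' + 1 - k\<bar> < k" "i + i' \<noteq> 1"
      by (auto simp: v_def N_def lattice_below_def algebra_simps)
    then show False
      using coprime_mult_eq_imp_zero[OF coprime] k_pos by force
  qed
  have "0 \<le> v p \<and> v p \<le> N" if p: "p \<in> lattice_below h k" for p
  proof -
    obtain j i where ji: "p = (j, i)" "1 \<le> j" "j < k" "1 \<le> i" "k * i \<le> h * j"
      using p by (auto simp: lattice_below_def)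
    moreover have "h * j \<le> h * (k - 1)" "k * 1 \<le> k * i"
      using ji h_pos k_pos by (intro mult_left_mono; simp)+
    ultimately show ?thesis
      unfolding v_def N_def ji(1) by (simp only: prod.case right_diff_distrib mult_1_right) linarith
  qed
  then have "v ` lattice_below h k \<union> (\<lambda>s. N - s) ` v ` lattice_below h k \<subseteq> {0..N}"
    by auto
  moreover have "card (v ` lattice_below h k \<union> (\<lambda>s. N - s) ` v ` lattice_below h k) = card {0..N}"
  proof -
    have "int (card (v ` lattice_below h k \<union> (\<lambda>s. N - s) ` v ` lattice_below h k))
        = 2 * int (card (lattice_below h k))"
      using inj disjoint by (simp add: card_Un_disjoint finite_lattice_below card_image inj_on_def)
    also have "\<dots> = N + 1"
      by (simp add: card_lattice_below N_def algebra_simps)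
    finally show ?thesis by simp
  qed
  ultimately show "v ` lattice_below h k \<union> (\<lambda>s. N - s) ` v ` lattice_below h k = {0..N}"
    by (intro card_subset_eq) auto
qed

lemma sum_neg_one_pow_lattice_value:
  "4 * (\<Sum>(j, i)\<in>lattice_below h k. neg_one_pow (j + i) * (h * j - k * i)) = - (h - 1) * (k - 1)"
proof -
  define v where "v = (\<lambda>(j, i). h * j - k * i)"
  define N where "N = h * k - h - k"
  define A where "A = v ` lattice_below h k"
  have inj: "inj_on v (lattice_below h k)" and disjoint: "A \<inter> (\<lambda>s. N - s) ` A = {}"
    and partition: "A \<union> (\<lambda>s. N - s) ` A = {0..N}"
    using lattice_values_partition unfolding A_def v_def N_def by simp_all
  have finite_A: "finite A"
    by (simp add: A_def finite_lattice_below)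
  have sum_A: "(\<Sum>s\<in>A. neg_one_pow s * g s)
      = (\<Sum>(j, i)\<in>lattice_below h k. neg_one_pow (j + i) * g (v (j, i)))" for g
  proof -
    have "neg_one_pow (v p) = neg_one_pow (fst p + snd p)" for p
      using odd_h odd_k by (cases p) (simp add: v_def neg_one_pow_def)
    then show ?thesis
      by (simp add: A_def sum.reindex[OF inj] case_prod_beta')
  qed
  have "N = 2 * int (card (lattice_below h k)) - 1"
    by (simp add: card_lattice_below N_def algebra_simps)
  then have "- int (card (lattice_below h k)) = (\<Sum>s\<in>{0..N}. neg_one_pow s * s)"
    by (simp add: sum_neg_one_pow_mult_even)
  also have "\<dots> = (\<Sum>s\<in>A. neg_one_pow s * s) + (\<Sum>s\<in>A. neg_one_pow (N - s) * (N - s))"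
    by (simp flip: partition add: sum.union_disjoint finite_A disjoint sum.reindex inj_on_def)
  also have "(\<Sum>s\<in>A. neg_one_pow (N - s) * (N - s))
      = (\<Sum>s\<in>A. neg_one_pow s * s) - N * (\<Sum>s\<in>A. neg_one_pow s * 1)"
  proof -
    have "neg_one_pow N = -1"
      using odd_h odd_k by (simp add: N_def neg_one_pow_def)
    then show ?thesis
      by (simp add: neg_one_pow_diff sum_distrib_left algebra_simps flip: sum_subtractf)
  qed
  finally have "- int (card (lattice_below h k))
      = 2 * (\<Sum>(j, i)\<in>lattice_below h k. neg_one_pow (j + i) * v (j, i))"
    by (simp add: sum_A sum_A[of "\<lambda>_. 1", simplified] sum_neg_one_pow_lattice_below)
  then show ?thesis
    using card_lattice_below by (simp add: v_def algebra_simps)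
qed

lemma B1_reciprocity: "2 * (k * B1 h k + h * B1 k h) = (h - 1) * (k - 1)"
proof -
  let ?L = "lattice_below h k"
  have "h * B1 k h = (\<Sum>(j, i)\<in>lattice_above h k. neg_one_pow (j + i) * (h * (2 * j - 1)))"
    using h_pos k_pos
    by (simp add: B1_eq_sum_lattice_above sum_distrib_left case_prod_beta' algebra_simps)
  also have "\<dots> = (\<Sum>(j, i)\<in>?L. neg_one_pow (j + i) * (h * (2 * (k - j) - 1)))"
  proof -
    have "neg_one_pow (k - j + (h - i)) = neg_one_pow (j + i)" for j i
      using odd_h odd_k by (simp add: neg_one_pow_def)
    then show ?thesis
      using sum.reindex_bij_betw[OF bij_betw_reflect_lattice[where h = h and k = k],
          of "\<lambda>(j, i). neg_one_pow (j + i) * (h * (2 * j - 1))"]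
      by (simp add: case_prod_beta')
  qed
  finally have "k * B1 h k + h * B1 k h
      = (\<Sum>(j, i)\<in>?L. neg_one_pow (j + i) * ((2 * h * k - h - k) - 2 * (h * j - k * i)))"
    using h_pos k_pos
    by (simp add: B1_eq_sum_lattice_below sum_distrib_left case_prod_beta' algebra_simps
        flip: sum.distrib)
  also have "\<dots> = (2 * h * k - h - k) * (\<Sum>(j, i)\<in>?L. neg_one_pow (j + i))
      - 2 * (\<Sum>(j, i)\<in>?L. neg_one_pow (j + i) * (h * j - k * i))"
    by (simp add: sum_distrib_left case_prod_beta' algebra_simps flip: sum_subtractf)
  finally show ?thesis
    using sum_neg_one_pow_lattice_below sum_neg_one_pow_lattice_value by (simp add: algebra_simps)
qed

end

lemma even_fib_iff: "even (fib n) \<longleftrightarrow> 3 dvd n"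
  by (induction n rule: fib.induct) (simp_all, presburger)

lemma fib_square_sum_odd:
  assumes "odd p"
  shows "int (fib p) ^ 2 + int (fib (p + 2)) ^ 2 + 1 = 3 * int (fib p) * int (fib (p + 2))"
proof -
  have "int (fib (p + 2)) * int (fib p) - int (fib (Suc p)) ^ 2 = 1"
    using fib_Cassini_int[of p] assms by simp
  moreover have "int (fib (p + 2)) = int (fib (Suc p)) + int (fib p)"
    by simp
  ultimately show ?thesis
    by algebra
qed

theorem theorem25:
  fixes n :: nat and h k :: int
  assumes "h = int (fib (6*n - 1))" and "k = int (fib (6*n + 1))"
    and "h > 0" and "k > 0" and "gcd h k = 1"
    and "dedekind_sum h k = dedekind_sum k h"
  shows "real_of_int (k * B1 h k + h * B1 k h)
           = real_of_int (h^2 - h - k + k^2) / 2 - real_of_int (h*k) + 1"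
proof -
  have "n \<noteq> 0"
    using assms(1,3) by (cases n) auto
  then have k: "k = int (fib (6*n - 1 + 2))"
    using assms(2) by (simp add: numeral_eq_Suc)
  have "odd h" "odd k"
    unfolding assms(1) k using \<open>n \<noteq> 0\<close> by (simp_all add: even_fib_iff) presburger+
  then interpret odd_coprime_pair h k
    using assms(3-5) by unfold_locales (simp_all add: coprime_iff_gcd_eq_1)
  have "h^2 + k^2 + 1 = 3 * h * k"
    unfolding assms(1) k using \<open>n \<noteq> 0\<close> by (intro fib_square_sum_odd) presburger
  then have "2 * (k * B1 h k + h * B1 k h) = (h^2 - h - k + k^2) - 2 * (h * k) + 2"
    using B1_reciprocity by algebra
  then have "real_of_int (2 * (k * B1 h k + h * B1 k h))
      = real_of_int ((h^2 - h - k + k^2) - 2 * (h * k) + 2)"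
    by (rule arg_cong)
  then show ?thesis
    by (simp add: field_simps)
qed

end
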